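(* Let $k\ge2$ be an integer, $\lambda=e^{2\pi i/k}$, and $a,b,c,d\in\mathbb{C}$. Suppose that for every $j\in\mathbb{N}$, both pairs $(x,y)=(a+\lambda^j d,\ c+\lambda^j b)$ and $(x,y)=(a+\lambda^j c,\ d+\lambda^j b)$ satisfy $x^k=y^k$ (these are the unary functions obtained by attaching the unary function $(1,\lambda^j)$ to either variable of $Q=\begin{pmatrix}a&c\\d&b\end{pmatrix}$). Then: If $k\ge3$, one of the following holds: (1) $a=b=c=d=0$; (2) $a=b=0$ and $c^k=d^k$; (3) $c=d=0$ and $a^k=b^k$; (4) none of $a,b,c,d$ is zero, $ab=cd$, and the ratio of any two of $a,b,c,d$ is a $k$-th root of unity. If $k=2$, one of the following holds: (1) $a=b=c=d=0$; (2) $a=b=0$ and $c^2=d^2$; (3) $c=d=0$ and $a^2=b^2$; (4) none of $a,b,c,d$ is zero, $b=a$ and $d=c$; (5) none of $a,b,c,d$ is zero, $b=-a$ and $d=-c$. *)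

theory Defs
  imports Complex_Main
begin
end

theory Submission
  imports Defs "HOL-Computational_Algebra.Polynomial"
begin

text \<open>
  As \<open>j\<close> varies, \<open>cis (2\<pi>/k) ^ j\<close> runs through all \<open>k\<close>-th roots of unity, so
  \<open>(x + w y)^k = (u + w v)^k\<close> holds for every root of unity \<open>w\<close>. Expanding binomially and
  reducing \<open>w^k = 1\<close>, both sides become polynomials in \<open>w\<close> of degree \<open>< k\<close>; agreeing at
  \<open>k\<close> points, they have equal coefficients: \<open>x^k + y^k = u^k + v^k\<close> and
  \<open>x^(k-m) y^m = u^(k-m) v^m\<close> for \<open>0 < m < k\<close>. The two constant terms give
  \<open>a^k = b^k\<close> and \<open>c^k = d^k\<close>. For \<open>k \<ge> 3\<close> the coefficients of \<open>w\<close> and \<open>w^2\<close> give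
  \<open>a^k = c^k\<close> and \<open>ab = cd\<close>; for \<open>k = 2\<close> the coefficient of \<open>w\<close>, \<open>ad = bc\<close>, rules out
  \<open>b = a, d = -c\<close> and \<open>b = -a, d = c\<close> unless one pair vanishes.
\<close>

lemma root_of_unity_eq_cis_power:
  assumes "k > 0" and "w ^ k = 1"
  shows "\<exists>j. w = cis (2 * pi / real k) ^ j"
proof -
  have "w \<in> (\<lambda>j. cis (2 * pi * real j / real k)) ` {..<k}"
    using bij_betw_roots_unity[OF \<open>k > 0\<close>] assms(2) unfolding bij_betw_def by simp
  then obtain j where "w = cis (2 * pi * real j / real k)" by blast
  also have "\<dots> = cis (2 * pi / real k) ^ j" by (simp add: DeMoivre mult_ac)
  finally show ?thesis by blast
qed

lemma poly_eq_0_if_roots_of_unity: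
  fixes p :: "complex poly"
  assumes "degree p < k" and "\<And>z. z ^ k = 1 \<Longrightarrow> poly p z = 0"
  shows "p = 0"
proof (rule ccontr)
  assume "p \<noteq> 0"
  have "k = card {z::complex. z ^ k = 1}"
    using card_roots_unity_eq[of k] assms(1) by simp
  also have "\<dots> \<le> card {z. poly p z = 0}"
    using assms(2) by (intro card_mono poly_roots_finite \<open>p \<noteq> 0\<close>) auto
  also have "\<dots> \<le> degree p"
    by (rule card_poly_roots_bound[OF \<open>p \<noteq> 0\<close>])
  finally show False using assms(1) by simp
qed

lemma sum_coeffs_eq_0_if_roots_of_unity:
  fixes f :: "nat \<Rightarrow> complex"
  assumes "\<And>z. z ^ k = 1 \<Longrightarrow> (\<Sum>m<k. f m * z ^ m) = 0" and "n < k"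
  shows "f n = 0"
proof -
  define p where "p = (\<Sum>m<k. monom (f m) m)"
  have coeff_p: "coeff p n = (if n < k then f n else 0)" for n
    by (simp add: p_def coeff_sum coeff_monom)
  have "degree p < k"
    using \<open>n < k\<close> by (intro degree_lessI) (auto simp: coeff_p)
  moreover have "poly p z = (\<Sum>m<k. f m * z ^ m)" for z
    by (simp add: p_def poly_sum poly_monom)
  ultimately have "p = 0"
    using assms(1) by (intro poly_eq_0_if_roots_of_unity) auto
  then show ?thesis using coeff_p[of n] \<open>n < k\<close> by simp
qed

lemma binomial_root_of_unity:
  fixes x y w :: "'a::comm_ring_1"
  assumes "w ^ k = 1"
  shows "(x + w * y) ^ k = y ^ k + (\<Sum>m<k. of_nat (k choose m) * x ^ (k - m) * y ^ m * w ^ m)"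
proof -
  have "(x + w * y) ^ k = (\<Sum>m\<le>k. of_nat (k choose m) * (w * y) ^ m * x ^ (k - m))"
    by (subst add.commute) (rule binomial_ring)
  also have "\<dots> = (w * y) ^ k + (\<Sum>m<k. of_nat (k choose m) * (w * y) ^ m * x ^ (k - m))"
    by (simp add: lessThan_Suc_atMost[symmetric])
  finally show ?thesis
    using assms by (simp add: power_mult_distrib mult_ac)
qed

lemma coeffs_eq_if_power_eq_on_roots_of_unity:
  fixes x y u v :: complex
  assumes "k > 0" and "\<And>w. w ^ k = 1 \<Longrightarrow> (x + w * y) ^ k = (u + w * v) ^ k"
  shows "x ^ k + y ^ k = u ^ k + v ^ k"
    and "\<And>m. 0 < m \<Longrightarrow> m < k \<Longrightarrow> x ^ (k - m) * y ^ m = u ^ (k - m) * v ^ m"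
proof -
  \<comment> \<open>the coefficient of \<open>w ^ m\<close> in \<open>(x + w y)^k - (u + w v)^k\<close> once \<open>w ^ k\<close> is replaced by 1\<close>
  define f where "f m = of_nat (k choose m) * x ^ (k - m) * y ^ m
    - of_nat (k choose m) * u ^ (k - m) * v ^ m + (if m = 0 then y ^ k - v ^ k else 0)" for m
  have f_0: "f m = 0" if "m < k" for m
  proof (rule sum_coeffs_eq_0_if_roots_of_unity[OF _ that])
    fix w :: complex assume w: "w ^ k = 1"
    have "(\<Sum>m<k. (if m = 0 then y ^ k - v ^ k else 0) * w ^ m) = y ^ k - v ^ k"
      using \<open>k > 0\<close> by (simp add: if_distrib[of "\<lambda>t. t * _"] cong: if_cong)
    then have "(\<Sum>m<k. f m * w ^ m) = ((x + w * y) ^ k - y ^ k) - ((u + w * v) ^ k - v ^ k) + (y ^ k - v ^ k)"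
      unfolding binomial_root_of_unity[OF w] f_def
      by (simp only: distrib_right left_diff_distrib sum.distrib sum_subtractf) simp
    then show "(\<Sum>m<k. f m * w ^ m) = 0"
      using assms(2)[OF w] by simp
  qed
  show "x ^ k + y ^ k = u ^ k + v ^ k"
    using f_0[OF \<open>k > 0\<close>] by (simp add: f_def algebra_simps)
  fix m assume "0 < m" "m < k"
  then show "x ^ (k - m) * y ^ m = u ^ (k - m) * v ^ m"
    using f_0[of m] by (simp add: f_def)
qed

lemma power_eq_and_mult_eq_if_coeff_eqs:
  fixes a b c d :: "'a::field"
  assumes "a \<noteq> 0" and "d \<noteq> 0"
    and coeff_1: "a ^ (n + 1) * d = c ^ (n + 1) * b"
    and coeff_2: "a ^ n * d ^ 2 = c ^ n * b ^ 2"
  shows "a ^ (n + 2) = c ^ (n + 2)" and "a * b = c * d"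
proof -
  have "a ^ (n + 2) * (a ^ n * d ^ 2) = (a ^ (n + 1) * d) ^ 2"
    by (simp add: power2_eq_square power_add algebra_simps)
  also have "\<dots> = c ^ (n + 2) * (c ^ n * b ^ 2)"
    unfolding coeff_1 by (simp add: power2_eq_square power_add algebra_simps)
  finally have "a ^ (n + 2) * (a ^ n * d ^ 2) = c ^ (n + 2) * (a ^ n * d ^ 2)"
    by (simp only: coeff_2)
  moreover have "a ^ n * d ^ 2 \<noteq> 0"
    using assms(1,2) by simp
  ultimately show a_c: "a ^ (n + 2) = c ^ (n + 2)"
    by (metis mult_right_cancel)
  have "a ^ (n + 2) * (c * d) = a * c * (a ^ (n + 1) * d)"
    by (simp add: algebra_simps)
  also have "\<dots> = c ^ (n + 2) * (a * b)"
    unfolding coeff_1 by (simp add: algebra_simps)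
  also have "\<dots> = a ^ (n + 2) * (a * b)"
    by (simp only: a_c)
  finally show "a * b = c * d"
    using assms(1) by (simp del: power_Suc power_add)
qed

lemma coeff_eqs_imp_cases:
  fixes a b c d :: "'a::field"
  assumes "2 \<le> k" and a_b: "a ^ k = b ^ k" and c_d: "c ^ k = d ^ k"
    and coeff_1: "a ^ (k - 1) * d = c ^ (k - 1) * b"
    and coeff_2: "a ^ (k - 2) * d ^ 2 = c ^ (k - 2) * b ^ 2"
  shows "(a = 0 \<and> b = 0 \<and> c = 0 \<and> d = 0)
          \<or> (a = 0 \<and> b = 0 \<and> c ^ k = d ^ k)
          \<or> (c = 0 \<and> d = 0 \<and> a ^ k = b ^ k)
          \<or> (a \<noteq> 0 \<and> b \<noteq> 0 \<and> c \<noteq> 0 \<and> d \<noteq> 0 \<and> a * b = c * d \<and>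
             (\<forall>x\<in>{a, b, c, d}. \<forall>y\<in>{a, b, c, d}. (x / y) ^ k = 1))"
proof -
  obtain n where k: "k = n + 2"
    using \<open>2 \<le> k\<close> by (metis add.commute le_Suc_ex)
  have a_0_iff: "a = 0 \<longleftrightarrow> b = 0" and c_0_iff: "c = 0 \<longleftrightarrow> d = 0"
    using a_b c_d \<open>2 \<le> k\<close> by (metis power_eq_0_iff not_numeral_le_zero neq0_conv)+
  consider "a = 0" | "c = 0" | "a \<noteq> 0" "c \<noteq> 0" by blast
  then show ?thesis
  proof cases
    case 3
    then have "b \<noteq> 0" "d \<noteq> 0" using a_0_iff c_0_iff by auto
    have "a ^ (n + 1) * d = c ^ (n + 1) * b" "a ^ n * d ^ 2 = c ^ n * b ^ 2"
      using coeff_1 coeff_2 by (simp_all add: k)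
    note a_c = power_eq_and_mult_eq_if_coeff_eqs[OF \<open>a \<noteq> 0\<close> \<open>d \<noteq> 0\<close> this, folded k]
    have "b ^ k = a ^ k" "c ^ k = a ^ k" "d ^ k = a ^ k"
      using a_b a_c(1) c_d by simp_all
    then have same_power: "x ^ k = a ^ k \<and> x \<noteq> 0" if "x \<in> {a, b, c, d}" for x
      using that 3 \<open>b \<noteq> 0\<close> \<open>d \<noteq> 0\<close> by auto
    have "(x / y) ^ k = 1" if "x \<in> {a, b, c, d}" "y \<in> {a, b, c, d}" for x y
      using same_power[OF that(1)] same_power[OF that(2)] \<open>a \<noteq> 0\<close> by (simp add: power_divide)
    then show ?thesis using 3 \<open>b \<noteq> 0\<close> \<open>d \<noteq> 0\<close> a_c(2) by blast
  qed (use a_0_iff c_0_iff a_b c_d in blast)+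
qed

lemma coeff_eqs_imp_cases_square:
  fixes a b c d :: "'a::idom"
  assumes "a ^ 2 = b ^ 2" and "c ^ 2 = d ^ 2" and "a * d = c * b"
  shows "(a = 0 \<and> b = 0 \<and> c = 0 \<and> d = 0)
          \<or> (a = 0 \<and> b = 0 \<and> c ^ 2 = d ^ 2)
          \<or> (c = 0 \<and> d = 0 \<and> a ^ 2 = b ^ 2)
          \<or> (a \<noteq> 0 \<and> b \<noteq> 0 \<and> c \<noteq> 0 \<and> d \<noteq> 0 \<and> b = a \<and> d = c)
          \<or> (a \<noteq> 0 \<and> b \<noteq> 0 \<and> c \<noteq> 0 \<and> d \<noteq> 0 \<and> b = - a \<and> d = - c)"
proof -
  have "b = a \<or> b = - a" and "d = c \<or> d = - c"
    using assms(1,2) by (auto simp: power2_eq_iff)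
  then show ?thesis
    using assms(3) by (elim disjE) (auto simp: power2_eq_iff)
qed

theorem mainTheorem15:
  fixes k :: nat and a b c d :: complex
  assumes hk: "k \<ge> 2"
    and h1: "\<And>j::nat. (a + (cis (2 * pi / real k)) ^ j * d) ^ k
                       = (c + (cis (2 * pi / real k)) ^ j * b) ^ k"
    and h2: "\<And>j::nat. (a + (cis (2 * pi / real k)) ^ j * c) ^ k
                       = (d + (cis (2 * pi / real k)) ^ j * b) ^ k"
  shows "(k \<ge> 3 \<longrightarrow>
            (a = 0 \<and> b = 0 \<and> c = 0 \<and> d = 0)
          \<or> (a = 0 \<and> b = 0 \<and> c ^ k = d ^ k)
          \<or> (c = 0 \<and> d = 0 \<and> a ^ k = b ^ k)
          \<or> (a \<noteq> 0 \<and> b \<noteq> 0 \<and> c \<noteq> 0 \<and> d \<noteq> 0 \<and> a * b = c * d \<and>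
             (\<forall>x\<in>{a, b, c, d}. \<forall>y\<in>{a, b, c, d}. (x / y) ^ k = 1)))
       \<and> (k = 2 \<longrightarrow>
            (a = 0 \<and> b = 0 \<and> c = 0 \<and> d = 0)
          \<or> (a = 0 \<and> b = 0 \<and> c ^ 2 = d ^ 2)
          \<or> (c = 0 \<and> d = 0 \<and> a ^ 2 = b ^ 2)
          \<or> (a \<noteq> 0 \<and> b \<noteq> 0 \<and> c \<noteq> 0 \<and> d \<noteq> 0 \<and> b = a \<and> d = c)
          \<or> (a \<noteq> 0 \<and> b \<noteq> 0 \<and> c \<noteq> 0 \<and> d \<noteq> 0 \<and> b = - a \<and> d = - c))"
proof -
  have "k > 0" using hk by simp
  have pair_1: "\<And>w. w ^ k = 1 \<Longrightarrow> (a + w * d) ^ k = (c + w * b) ^ k"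
    and pair_2: "\<And>w. w ^ k = 1 \<Longrightarrow> (a + w * c) ^ k = (d + w * b) ^ k"
    using root_of_unity_eq_cis_power[OF \<open>k > 0\<close>] h1 h2 by blast+
  have "a ^ k + d ^ k = c ^ k + b ^ k" "a ^ k + c ^ k = d ^ k + b ^ k"
    using coeffs_eq_if_power_eq_on_roots_of_unity(1)[OF \<open>k > 0\<close>] pair_1 pair_2 by blast+
  moreover have "x + v = u + y \<Longrightarrow> x + u = v + y \<Longrightarrow> x = y \<and> u = v" for x y u v :: complex
    by algebra
  ultimately have a_b: "a ^ k = b ^ k" and c_d: "c ^ k = d ^ k"
    by metis+
  have mixed: "a ^ (k - m) * d ^ m = c ^ (k - m) * b ^ m" if "0 < m" "m < k" for m
    using coeffs_eq_if_power_eq_on_roots_of_unity(2)[OF \<open>k > 0\<close> _ that] pair_1 by blast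
  show ?thesis
  proof (intro conjI impI coeff_eqs_imp_cases[OF hk a_b c_d] coeff_eqs_imp_cases_square)
  qed (use mixed[of 1] mixed[of 2] a_b c_d in \<open>simp_all add: mult.commute\<close>)
qed

end
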